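(* Let $\mathcal X=\mathbb R^d$, $\sigma>0$, $\varepsilon>0$. Suppose $F:\mathcal P_2(\mathbb R^d)\to\mathbb R$ satisfies $F\ge F_{\min}$, $\xi$ is as below, and $\pi=e^{-U}$ is a probability density with $U(x)\ge C_0+C_1|x|^2$ for all $x$, for some $C_0\in\mathbb R$, $C_1>0$. Then for all $m\in\mathcal P_2(\mathbb R^d)$ and all $\delta>0$, $$\frac1\sigma V^\sigma_\varepsilon(m)\ \ge\ \frac1\sigma F_{\min}+C_0+C_1M_2(m)-\Big(\frac{2\pi}{\delta}\Big)^{d/2}-2\delta\big(M_2(m)+\varepsilon^2M_2(\xi)\big),$$ where $V^\sigma_\varepsilon(m)=F(m)+\sigma\int\log\frac{(K_\varepsilon*m)(x)}{\pi(x)}\,m(dx)$.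
   Context: $\xi:\mathbb R^d\to\mathbb R_+$ is a smooth, Lipschitz, radial probability density with full support and finite second moment; $\xi_\varepsilon(z)=\varepsilon^{-d}\xi(z/\varepsilon)$; $K_\varepsilon=\xi_\varepsilon*\xi_\varepsilon$; $(K_\varepsilon*m)(x)=\int K_\varepsilon(x-y)m(dy)$. $M_2(m)=\int|x|^2m(dx)$ and $M_2(\xi)=\int|z|^2\xi(z)dz$; here $\pi$ in $(2\pi/\delta)^{d/2}$ denotes the number $3.14159\ldots$. *)

theory Defs
  imports "HOL-Probability.Probability"
begin

coinductive smooth_fun :: "('a::euclidean_space \<Rightarrow> real) \<Rightarrow> bool" where
  "(\<forall>x. f differentiable (at x)) \<Longrightarrow>
   (\<forall>b\<in>Basis. smooth_fun (\<lambda>x. frechet_derivative f (at x) b)) \<Longrightarrow> smooth_fun f"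

definition P2 :: "'a::euclidean_space measure \<Rightarrow> bool" where
  "P2 m \<longleftrightarrow> prob_space m \<and> sets m = sets borel \<and> integrable m (\<lambda>x. (norm x)\<^sup>2)"

definition M2 :: "'a::euclidean_space measure \<Rightarrow> real" where
  "M2 m = (\<integral>x. (norm x)\<^sup>2 \<partial>m)"

definition M2_dens :: "('a::euclidean_space \<Rightarrow> real) \<Rightarrow> real" where
  "M2_dens \<xi> = (\<integral>z. (norm z)\<^sup>2 * \<xi> z \<partial>lborel)"

definition ext_integral :: "'a measure \<Rightarrow> ('a \<Rightarrow> real) \<Rightarrow> ereal" where
  "ext_integral M f = enn2ereal (\<integral>\<^sup>+x. ennreal (max 0 (f x)) \<partial>M)
                      - enn2ereal (\<integral>\<^sup>+x. ennreal (max 0 (- f x)) \<partial>M)"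

definition mollifier :: "real \<Rightarrow> ('a::euclidean_space \<Rightarrow> real) \<Rightarrow> 'a \<Rightarrow> real" where
  "mollifier \<epsilon> \<xi> z = \<epsilon> powr (- real DIM('a)) * \<xi> (z /\<^sub>R \<epsilon>)"

definition kernelK :: "real \<Rightarrow> ('a::euclidean_space \<Rightarrow> real) \<Rightarrow> 'a \<Rightarrow> real" where
  "kernelK \<epsilon> \<xi> x = (\<integral>y. mollifier \<epsilon> \<xi> (x - y) * mollifier \<epsilon> \<xi> y \<partial>lborel)"

definition convK :: "real \<Rightarrow> ('a::euclidean_space \<Rightarrow> real) \<Rightarrow> 'a measure \<Rightarrow> 'a \<Rightarrow> real" where
  "convK \<epsilon> \<xi> m x = (\<integral>y. kernelK \<epsilon> \<xi> (x - y) \<partial>m)"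

definition Vfun :: "('a::euclidean_space measure \<Rightarrow> real) \<Rightarrow> real \<Rightarrow> real \<Rightarrow> ('a \<Rightarrow> real)
    \<Rightarrow> ('a \<Rightarrow> real) \<Rightarrow> 'a measure \<Rightarrow> ereal" where
  "Vfun F \<sigma> \<epsilon> \<xi> p m = ereal (F m) + ereal \<sigma> * ext_integral m (\<lambda>x. ln (convK \<epsilon> \<xi> m x / p x))"

end

theory Submission
  imports Defs
begin

text \<open>
  Let \<open>\<phi> = \<xi>\<^sub>\<epsilon>\<close> and \<open>\<nu> = \<phi> * m\<close>, so that \<open>K\<^sub>\<epsilon> * m = \<phi> * \<nu>\<close>, and let \<open>g\<close> be the Gaussian
  density \<open>(\<delta>/pi)^(d/2) exp (-\<delta> |y|^2)\<close>. For \<open>r = (K\<^sub>\<epsilon> * m)(x) > 0\<close>, applying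
  \<open>ln t \<le> t - 1\<close> to \<open>\<nu>(y)/r\<close> and to \<open>g(y)/\<nu>(y)\<close> gives
  \<open>2 + ln g(y) - ln r \<le> \<nu>(y)/r + g(y)/\<nu>(y)\<close>; averaging against \<open>\<phi>(x - y) dy\<close> yields
  \<open>- ln r \<le> \<delta> \<integral>\<phi>(x - y) |y|^2 dy + (d/2) ln (pi/\<delta>) - 1 + G(x)\<close>, where
  \<open>G(x) = \<integral>\<phi>(x - y) g(y)/\<nu>(y) dy\<close> has \<open>\<integral>G dm \<le> \<integral>g = 1\<close> because \<open>\<phi>\<close> is even.
  Integrating against \<open>m\<close>, with \<open>\<integral>\<phi>(x - y) |y|^2 dy \<le> 2|x|^2 + 2\<epsilon>^2 M\<^sub>2(\<xi>)\<close>,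
  \<open>U(x) \<ge> C\<^sub>0 + C\<^sub>1|x|^2\<close> and \<open>(d/2) ln (pi/\<delta>) \<le> (2pi/\<delta>)^(d/2)\<close>, gives the bound.
  All of this is done with \<open>ennreal\<close>-valued integrals, so points where \<open>K\<^sub>\<epsilon> * m\<close> vanishes
  are harmless: there \<open>G = \<infinity>\<close>.
\<close>

lemma nn_integral_lborel_affine:
  fixes f :: "'a::euclidean_space \<Rightarrow> ennreal"
  assumes [measurable]: "f \<in> borel_measurable borel" and "c \<noteq> 0"
  shows "(\<integral>\<^sup>+x. f x \<partial>lborel) = ennreal (\<bar>c\<bar> ^ DIM('a)) * (\<integral>\<^sup>+x. f (t + c *\<^sub>R x) \<partial>lborel)"
  by (subst lborel_affine[OF \<open>c \<noteq> 0\<close>, of t])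
     (simp add: nn_integral_density nn_integral_distr nn_integral_cmult)

lemma nn_integral_lborel_reflect:
  fixes f :: "'a::euclidean_space \<Rightarrow> ennreal"
  assumes "f \<in> borel_measurable borel"
  shows "(\<integral>\<^sup>+y. f (x - y) \<partial>lborel) = (\<integral>\<^sup>+y. f y \<partial>lborel)"
  using nn_integral_lborel_affine[OF assms, of "-1" x] by simp

lemma nn_integral_lborel_translate:
  fixes f :: "'a::euclidean_space \<Rightarrow> ennreal"
  assumes "f \<in> borel_measurable borel"
  shows "(\<integral>\<^sup>+y. f (t + y) \<partial>lborel) = (\<integral>\<^sup>+y. f y \<partial>lborel)"
  using nn_integral_lborel_affine[OF assms, of 1 t] by simp

lemma ennreal_mult_divide_le: "(a::ennreal) * (b / a) \<le> b"
proof (cases "a = 0 \<or> a = \<infinity>")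
  case False
  then show ?thesis
    by (simp add: ennreal_times_divide mult.commute[of a b] mult_divide_eq_ennreal)
qed auto

lemma two_plus_ln_diff_le:
  fixes r n g :: real
  assumes "r > 0" "n > 0" "g > 0"
  shows "2 + ln g - ln r \<le> n / r + g / n"
proof -
  have "ln (n / r) \<le> n / r - 1" "ln (g / n) \<le> g / n - 1"
    using assms by (auto intro!: ln_le_minus_one)
  moreover have "ln (n / r) + ln (g / n) = ln g - ln r"
    using assms by (simp add: ln_div)
  ultimately show ?thesis by linarith
qed

lemma ennreal_mult_two_plus_ln_diff_le:
  fixes a r g c :: real and n :: ennreal
  assumes "a \<ge> 0" "r > 0" "g > 0" "c \<ge> 0"
  shows "ennreal (a * (2 + ln g - ln r + c))
    \<le> ennreal (a * c) + ennreal a * n / ennreal r + ennreal a * (ennreal g / n)"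
proof (cases "a = 0 \<or> n = 0 \<or> n = \<infinity>")
  case True
  with assms show ?thesis
    by (auto simp: ennreal_top_divide ennreal_mult_top)
next
  case False
  then obtain n' where n': "n = ennreal n'" "n' > 0"
    by (cases n) auto
  have "a * (2 + ln g - ln r + c) \<le> a * c + a * (n' / r) + a * (g / n')"
    using mult_left_mono[OF two_plus_ln_diff_le[OF assms(2) n'(2) assms(3)] assms(1)]
    by (simp add: algebra_simps)
  then have "ennreal (a * (2 + ln g - ln r + c)) \<le> ennreal (a * c) + ennreal (a * (n' / r)) + ennreal (a * (g / n'))"
    using assms n' by (simp add: ennreal_plus[symmetric] del: ennreal_plus)
  also have "ennreal (a * (n' / r)) = ennreal a * n / ennreal r"
    using assms n' by (simp add: ennreal_mult[symmetric] divide_ennreal)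
  also have "ennreal (a * (g / n')) = ennreal a * (ennreal g / n)"
    using assms n' by (simp add: ennreal_mult[symmetric] divide_ennreal)
  finally show ?thesis .
qed

lemma mult_ln_le_powr:
  fixes x y a :: real
  assumes "0 < x" "x \<le> y" "0 \<le> a"
  shows "a * ln x \<le> y powr a"
proof -
  have "a * ln x = ln (x powr a)"
    using assms(1) by (simp add: ln_powr)
  also have "\<dots> \<le> x powr a - 1"
    using assms(1) by (intro ln_le_minus_one) simp
  also have "\<dots> \<le> y powr a"
    using powr_mono2[OF assms(3) less_imp_le[OF assms(1)] assms(2)] by linarith
  finally show ?thesis .
qed

definition gaussian_density :: "real \<Rightarrow> 'a::euclidean_space \<Rightarrow> real" where
  "gaussian_density \<delta> y = (\<Prod>b\<in>Basis. normal_density 0 (sqrt (1 / (2 * \<delta>))) (y \<bullet> b))"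

lemma measurable_gaussian_density[measurable]: "gaussian_density \<delta> \<in> borel_measurable borel"
  unfolding gaussian_density_def[abs_def] by measurable

lemma gaussian_density_pos: "\<delta> > 0 \<Longrightarrow> gaussian_density \<delta> y > 0"
  unfolding gaussian_density_def by (intro prod_pos normal_density_pos) auto

lemma nn_integral_gaussian_density:
  assumes "\<delta> > 0"
  shows "(\<integral>\<^sup>+y. ennreal (gaussian_density \<delta> y) \<partial>(lborel :: 'a::euclidean_space measure)) = 1"
proof -
  let ?s = "sqrt (1 / (2 * \<delta>))"
  have "(\<integral>\<^sup>+y. ennreal (gaussian_density \<delta> y) \<partial>(lborel :: 'a measure))
      = (\<integral>\<^sup>+y. (\<Prod>b\<in>(Basis :: 'a set). ennreal (normal_density 0 ?s (y \<bullet> b))) \<partial>lborel)"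
    unfolding gaussian_density_def by (subst prod_ennreal) auto
  also have "\<dots> = (\<Prod>b\<in>(Basis :: 'a set). \<integral>\<^sup>+t. ennreal (normal_density 0 ?s t) \<partial>lborel)"
    by (subst nn_integral_lborel_prod) auto
  also have "\<dots> = (\<Prod>b\<in>(Basis :: 'a set). 1)"
    using assms by (intro prod.cong refl) (simp add: nn_integral_eq_integral)
  finally show ?thesis by simp
qed

lemma ln_gaussian_density:
  assumes "\<delta> > 0"
  shows "ln (gaussian_density \<delta> (y :: 'a::euclidean_space))
    = - \<delta> * (norm y)\<^sup>2 - real DIM('a) / 2 * ln (pi / \<delta>)"
proof -
  define s where "s = sqrt (1 / (2 * \<delta>))"
  have s2: "s\<^sup>2 = 1 / (2 * \<delta>)" unfolding s_def using assms by simp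
  have ln_normal: "ln (normal_density 0 s t) = - ln (pi / \<delta>) / 2 - \<delta> * t\<^sup>2" for t
  proof -
    have variance: "2 * pi * s\<^sup>2 = pi / \<delta>" "- (t - 0)\<^sup>2 / (2 * s\<^sup>2) = - \<delta> * t\<^sup>2"
      unfolding s2 using assms by simp_all
    have "normal_density 0 s t = inverse (sqrt (pi / \<delta>)) * exp (- \<delta> * t\<^sup>2)"
      unfolding normal_density_def variance by (simp add: divide_inverse)
    then show ?thesis using assms by (simp add: ln_mult ln_inverse ln_sqrt)
  qed
  have "ln (gaussian_density \<delta> y) = (\<Sum>b\<in>(Basis :: 'a set). ln (normal_density 0 s (y \<bullet> b)))"
  proof -
    have "normal_density 0 s t \<noteq> 0" for t
      using normal_density_pos[of s 0 t] assms by (simp add: s_def)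
    then show ?thesis
      unfolding gaussian_density_def s_def[symmetric] by (subst ln_prod) auto
  qed
  also have "\<dots> = (\<Sum>b\<in>(Basis :: 'a set). - ln (pi / \<delta>) / 2 - \<delta> * (y \<bullet> b)\<^sup>2)"
    by (simp only: ln_normal)
  also have "\<dots> = - real DIM('a) * (ln (pi / \<delta>) / 2) - \<delta> * (\<Sum>b\<in>(Basis :: 'a set). (y \<bullet> b)\<^sup>2)"
    by (simp only: sum_subtractf sum_distrib_left[symmetric] sum_constant)
  also have "(\<Sum>b\<in>(Basis :: 'a set). (y \<bullet> b)\<^sup>2) = (norm y)\<^sup>2"
    unfolding power2_norm_eq_inner euclidean_inner[of y y] by (simp add: power2_eq_square)
  finally show ?thesis by simp
qed

lemma ennreal_mult_ln_ratio_gaussian_le: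
  fixes y :: "'a::euclidean_space" and n :: ennreal
  assumes "\<delta> > 0" "a \<ge> 0" "r > 0"
  shows "ennreal a * ennreal (2 - real DIM('a) / 2 * ln (pi / \<delta>) - ln r)
    \<le> ennreal \<delta> * ennreal (a * (norm y)\<^sup>2) + ennreal a * n / ennreal r
      + ennreal a * (ennreal (gaussian_density \<delta> y) / n)"
proof -
  define C where "C = 2 - real DIM('a) / 2 * ln (pi / \<delta>) - ln r"
  have "C = 2 + ln (gaussian_density \<delta> y) - ln r + \<delta> * (norm y)\<^sup>2"
    unfolding C_def using ln_gaussian_density[OF assms(1), of y] by simp
  then have "ennreal a * ennreal C \<le> ennreal (a * (2 + ln (gaussian_density \<delta> y) - ln r + \<delta> * (norm y)\<^sup>2))"
    using assms(2) by (cases "C \<ge> 0") (auto simp: ennreal_mult ennreal_neg)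
  also have "\<dots> \<le> ennreal (a * (\<delta> * (norm y)\<^sup>2)) + ennreal a * n / ennreal r
      + ennreal a * (ennreal (gaussian_density \<delta> y) / n)"
    using assms gaussian_density_pos[OF assms(1), of y] by (intro ennreal_mult_two_plus_ln_diff_le) auto
  also have "ennreal (a * (\<delta> * (norm y)\<^sup>2)) = ennreal \<delta> * ennreal (a * (norm y)\<^sup>2)"
    using assms(1,2) by (simp add: ennreal_mult[symmetric] mult_ac)
  finally show ?thesis
    unfolding C_def .
qed

lemma ext_integral_ge:
  fixes f h :: "'a \<Rightarrow> real" and G :: "'a \<Rightarrow> ennreal"
  assumes [measurable]: "f \<in> borel_measurable M" "G \<in> borel_measurable M"
    and h: "integrable M h"
    and f_ge: "\<And>x. x \<in> space M \<Longrightarrow> ennreal (h x - f x) \<le> G x"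
    and G: "(\<integral>\<^sup>+x. G x \<partial>M) \<le> ennreal c" "c \<ge> 0"
  shows "ereal ((\<integral>x. h x \<partial>M) - c) \<le> ext_integral M f"
proof -
  obtain a b where ab_nonneg: "a \<ge> 0" "b \<ge> 0"
    and ab: "(\<integral>\<^sup>+x. ennreal (h x) \<partial>M) = ennreal a" "(\<integral>\<^sup>+x. ennreal (- h x) \<partial>M) = ennreal b"
    and [measurable]: "h \<in> borel_measurable M" and int_h: "(\<integral>x. h x \<partial>M) = a - b"
    using h by (rule integrableE)
  have pointwise: "ennreal (- f x) + ennreal (h x) \<le> ennreal (f x) + ennreal (- h x) + G x"
    if "x \<in> space M" for x
  proof (cases "G x" rule: ennreal_cases)
    case (real g)
    then have "h x - f x \<le> g"
      using f_ge[OF that] by simp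
    then have "ennreal (max 0 (- f x) + max 0 (h x)) \<le> ennreal (max 0 (f x) + max 0 (- h x) + g)"
      by (intro ennreal_leI) (auto simp: max_def)
    then show ?thesis
      using real by (simp add: ennreal_max_0)
  qed simp
  have "(\<integral>\<^sup>+x. ennreal (- f x) \<partial>M) + ennreal a = (\<integral>\<^sup>+x. ennreal (- f x) + ennreal (h x) \<partial>M)"
    by (simp add: nn_integral_add ab)
  also have "\<dots> \<le> (\<integral>\<^sup>+x. ennreal (f x) + ennreal (- h x) + G x \<partial>M)"
    by (intro nn_integral_mono pointwise)
  also have "\<dots> = (\<integral>\<^sup>+x. ennreal (f x) \<partial>M) + ennreal b + (\<integral>\<^sup>+x. G x \<partial>M)"
    by (simp add: nn_integral_add ab)
  also have "\<dots> \<le> (\<integral>\<^sup>+x. ennreal (f x) \<partial>M) + ennreal b + ennreal c"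
    using G(1) by (rule add_left_mono)
  finally have le: "(\<integral>\<^sup>+x. ennreal (- f x) \<partial>M) + ennreal a
      \<le> (\<integral>\<^sup>+x. ennreal (f x) \<partial>M) + ennreal b + ennreal c" .
  show ?thesis
    unfolding ext_integral_def ennreal_max_0 int_h
  proof (cases "\<integral>\<^sup>+x. ennreal (f x) \<partial>M" rule: ennreal_cases)
    case (real p)
    moreover obtain n where "0 \<le> n" "(\<integral>\<^sup>+x. ennreal (- f x) \<partial>M) = ennreal n"
      using le real by (cases "\<integral>\<^sup>+x. ennreal (- f x) \<partial>M" rule: ennreal_cases) (auto simp: top_unique)
    ultimately show "ereal (a - b - c) \<le> enn2ereal (\<integral>\<^sup>+x. ennreal (f x) \<partial>M) - enn2ereal (\<integral>\<^sup>+x. ennreal (- f x) \<partial>M)"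
      using le G(2) ab_nonneg by (auto simp flip: ennreal_plus)
  qed simp
qed

lemma ereal_divide_add_mult_ge:
  fixes \<sigma> a b b' :: real and E :: ereal
  assumes "\<sigma> > 0" "b \<le> b'" "ereal a \<le> E"
  shows "ereal (b / \<sigma> + a) \<le> (ereal b' + ereal \<sigma> * E) / ereal \<sigma>"
proof (cases E)
  case (real r)
  have "b / \<sigma> + a \<le> b' / \<sigma> + r"
    using assms real by (intro add_mono divide_right_mono) auto
  also have "\<dots> = (b' + \<sigma> * r) / \<sigma>"
    using assms by (simp add: field_simps)
  finally show ?thesis
    using real assms(1) by simp
qed (use assms in auto)

locale lipschitz_mollifier =
  fixes \<epsilon> :: real and \<xi> :: "'a::euclidean_space \<Rightarrow> real" and L :: real
  assumes eps_pos: "\<epsilon> > 0"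
    and xi_lipschitz: "L-lipschitz_on UNIV \<xi>"
    and xi_radial: "\<And>x y. norm x = norm y \<Longrightarrow> \<xi> x = \<xi> y"
    and xi_nonneg: "\<And>z. \<xi> z \<ge> 0"
    and xi_integrable: "integrable lborel \<xi>"
    and xi_integral: "(\<integral>z. \<xi> z \<partial>lborel) = 1"
    and xi_M2_integrable: "integrable lborel (\<lambda>z. (norm z)\<^sup>2 * \<xi> z)"
begin

abbreviation "\<phi> \<equiv> mollifier \<epsilon> \<xi>"

lemma measurable_xi[measurable]: "\<xi> \<in> borel_measurable borel"
  using lipschitz_on_continuous_on[OF xi_lipschitz] by (intro borel_measurable_continuous_onI) simp

lemma measurable_phi[measurable]: "\<phi> \<in> borel_measurable borel"
  unfolding mollifier_def[abs_def] by measurable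

lemma phi_nonneg[simp]: "\<phi> z \<ge> 0"
  unfolding mollifier_def using xi_nonneg by simp

lemma phi_minus_commute: "\<phi> (x - y) = \<phi> (y - x)"
proof -
  have "\<xi> ((x - y) /\<^sub>R \<epsilon>) = \<xi> ((y - x) /\<^sub>R \<epsilon>)"
    by (rule xi_radial) (simp add: norm_minus_commute)
  then show ?thesis
    unfolding mollifier_def by simp
qed

lemma M2_dens_nonneg: "M2_dens \<xi> \<ge> 0"
  unfolding M2_dens_def using xi_nonneg by (intro integral_nonneg_AE) auto

lemma nn_integral_phi_rescale:
  assumes [measurable]: "h \<in> borel_measurable borel"
  shows "(\<integral>\<^sup>+z. ennreal (\<phi> z * h z) \<partial>lborel) = (\<integral>\<^sup>+x. ennreal (\<xi> x * h (\<epsilon> *\<^sub>R x)) \<partial>lborel)"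
proof -
  have "(\<integral>\<^sup>+z. ennreal (\<phi> z * h z) \<partial>lborel)
      = ennreal (\<epsilon> ^ DIM('a)) * (\<integral>\<^sup>+x. ennreal (\<phi> (\<epsilon> *\<^sub>R x) * h (\<epsilon> *\<^sub>R x)) \<partial>lborel)"
    using nn_integral_lborel_affine[of "\<lambda>z. ennreal (\<phi> z * h z)" \<epsilon> 0] eps_pos by simp
  also have "\<dots> = (\<integral>\<^sup>+x. ennreal (\<epsilon> ^ DIM('a) * (\<phi> (\<epsilon> *\<^sub>R x) * h (\<epsilon> *\<^sub>R x))) \<partial>lborel)"
    using eps_pos by (simp add: nn_integral_cmult[symmetric] ennreal_mult')
  also have "\<dots> = (\<integral>\<^sup>+x. ennreal (\<xi> x * h (\<epsilon> *\<^sub>R x)) \<partial>lborel)"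
  proof (rule nn_integral_cong)
    fix x :: 'a
    have "\<epsilon> ^ DIM('a) * \<epsilon> powr (- real DIM('a)) = 1"
      using eps_pos by (simp add: powr_minus powr_realpow)
    moreover have "(\<epsilon> *\<^sub>R x) /\<^sub>R \<epsilon> = x"
      using eps_pos by simp
    ultimately show "ennreal (\<epsilon> ^ DIM('a) * (\<phi> (\<epsilon> *\<^sub>R x) * h (\<epsilon> *\<^sub>R x))) = ennreal (\<xi> x * h (\<epsilon> *\<^sub>R x))"
      unfolding mollifier_def by (metis (no_types, lifting) mult.assoc mult_1)
  qed
  finally show ?thesis .
qed

lemma nn_integral_phi: "(\<integral>\<^sup>+z. ennreal (\<phi> z) \<partial>lborel) = 1"
  using nn_integral_phi_rescale[of "\<lambda>_. 1"] xi_integrable xi_nonneg xi_integral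
  by (simp add: nn_integral_eq_integral)

lemma nn_integral_phi_diff: "(\<integral>\<^sup>+y. ennreal (\<phi> (x - y)) \<partial>lborel) = 1"
  using nn_integral_lborel_reflect[of "\<lambda>z. ennreal (\<phi> z)" x] nn_integral_phi by simp

lemma nn_integral_phi_norm_sq:
  "(\<integral>\<^sup>+z. ennreal (\<phi> z * (norm z)\<^sup>2) \<partial>lborel) = ennreal (\<epsilon>\<^sup>2 * M2_dens \<xi>)"
proof -
  have "(\<integral>\<^sup>+z. ennreal (\<phi> z * (norm z)\<^sup>2) \<partial>lborel)
      = (\<integral>\<^sup>+x. ennreal (\<epsilon>\<^sup>2) * ennreal ((norm x)\<^sup>2 * \<xi> x) \<partial>lborel)"
    using eps_pos xi_nonneg
    by (simp add: nn_integral_phi_rescale ennreal_mult[symmetric] power_mult_distrib mult_ac)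
  also have "\<dots> = ennreal (\<epsilon>\<^sup>2) * ennreal (M2_dens \<xi>)"
    unfolding M2_dens_def using xi_M2_integrable xi_nonneg
    by (simp add: nn_integral_cmult nn_integral_eq_integral)
  finally show ?thesis
    using M2_dens_nonneg by (simp add: ennreal_mult)
qed

lemma nn_integral_phi_norm_le:
  "(\<integral>\<^sup>+z. ennreal (\<phi> z * norm z) \<partial>lborel) \<le> ennreal (1 + \<epsilon>\<^sup>2 * M2_dens \<xi>)"
proof -
  have "(\<integral>\<^sup>+z. ennreal (\<phi> z * norm z) \<partial>lborel)
      \<le> (\<integral>\<^sup>+z. ennreal (\<phi> z) + ennreal (\<phi> z * (norm z)\<^sup>2) \<partial>lborel)"
  proof (rule nn_integral_mono)
    fix z :: 'a
    have "2 * norm z \<le> 1 + (norm z)\<^sup>2"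
      using zero_le_power2[of "norm z - 1"] by (simp add: power2_diff)
    then have "norm z \<le> 1 + (norm z)\<^sup>2"
      using norm_ge_zero[of z] by linarith
    then have "\<phi> z * norm z \<le> \<phi> z * (1 + (norm z)\<^sup>2)"
      by (intro mult_left_mono) simp_all
    then have "\<phi> z * norm z \<le> \<phi> z + \<phi> z * (norm z)\<^sup>2"
      by (simp add: distrib_left)
    then show "ennreal (\<phi> z * norm z) \<le> ennreal (\<phi> z) + ennreal (\<phi> z * (norm z)\<^sup>2)"
      by (simp add: ennreal_plus[symmetric] ennreal_leI del: ennreal_plus)
  qed
  also have "\<dots> = ennreal (1 + \<epsilon>\<^sup>2 * M2_dens \<xi>)"
    using M2_dens_nonneg by (simp add: nn_integral_add nn_integral_phi nn_integral_phi_norm_sq)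
  finally show ?thesis .
qed

lemma nn_integral_phi_diff_norm_sq_le:
  "(\<integral>\<^sup>+y. ennreal (\<phi> (x - y) * (norm y)\<^sup>2) \<partial>lborel) \<le> ennreal (2 * ((norm x)\<^sup>2 + \<epsilon>\<^sup>2 * M2_dens \<xi>))"
proof -
  have "(\<integral>\<^sup>+y. ennreal (\<phi> (x - y) * (norm y)\<^sup>2) \<partial>lborel)
      \<le> (\<integral>\<^sup>+y. ennreal (2 * (norm x)\<^sup>2) * ennreal (\<phi> (x - y)) + 2 * ennreal (\<phi> (x - y) * (norm (x - y))\<^sup>2) \<partial>lborel)"
  proof (rule nn_integral_mono)
    fix y :: 'a
    have "norm y \<le> norm x + norm (x - y)"
      using norm_triangle_ineq4[of x "x - y"] by simp
    then have "(norm y)\<^sup>2 \<le> (norm x + norm (x - y))\<^sup>2"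
      by (intro power_mono) auto
    also have "\<dots> \<le> 2 * (norm x)\<^sup>2 + 2 * (norm (x - y))\<^sup>2"
      using zero_le_power2[of "norm x - norm (x - y)"] by (simp add: power2_sum power2_diff)
    finally have "\<phi> (x - y) * (norm y)\<^sup>2 \<le> \<phi> (x - y) * (2 * (norm x)\<^sup>2 + 2 * (norm (x - y))\<^sup>2)"
      by (intro mult_left_mono) simp_all
    then have "\<phi> (x - y) * (norm y)\<^sup>2 \<le> 2 * (norm x)\<^sup>2 * \<phi> (x - y) + 2 * (\<phi> (x - y) * (norm (x - y))\<^sup>2)"
      by (simp add: algebra_simps)
    then have "ennreal (\<phi> (x - y) * (norm y)\<^sup>2)
        \<le> ennreal (2 * (norm x)\<^sup>2 * \<phi> (x - y) + 2 * (\<phi> (x - y) * (norm (x - y))\<^sup>2))"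
      by (rule ennreal_leI)
    also have "\<dots> = ennreal (2 * (norm x)\<^sup>2) * ennreal (\<phi> (x - y)) + 2 * ennreal (\<phi> (x - y) * (norm (x - y))\<^sup>2)"
      by (simp add: ennreal_plus ennreal_mult)
    finally show "ennreal (\<phi> (x - y) * (norm y)\<^sup>2)
        \<le> ennreal (2 * (norm x)\<^sup>2) * ennreal (\<phi> (x - y)) + 2 * ennreal (\<phi> (x - y) * (norm (x - y))\<^sup>2)" .
  qed
  also have "\<dots> = ennreal (2 * (norm x)\<^sup>2) + 2 * ennreal (\<epsilon>\<^sup>2 * M2_dens \<xi>)"
    using nn_integral_lborel_reflect[of "\<lambda>z. ennreal (\<phi> z * (norm z)\<^sup>2)" x]
    by (simp add: nn_integral_add nn_integral_cmult nn_integral_phi_diff nn_integral_phi_norm_sq)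
  also have "\<dots> = ennreal (2 * ((norm x)\<^sup>2 + \<epsilon>\<^sup>2 * M2_dens \<xi>))"
    using M2_dens_nonneg by (simp add: distrib_left ennreal_plus ennreal_mult)
  finally show ?thesis .
qed

definition phi_slope :: real where
  "phi_slope = \<epsilon> powr (- real DIM('a)) * L / \<epsilon>"

lemma phi_slope_nonneg: "phi_slope \<ge> 0"
  unfolding phi_slope_def using eps_pos lipschitz_on_nonneg[OF xi_lipschitz] by simp

lemma phi_le_affine: "\<phi> z \<le> \<phi> 0 + phi_slope * norm z"
proof -
  have "\<xi> (z /\<^sub>R \<epsilon>) \<le> \<xi> 0 + L * norm (z /\<^sub>R \<epsilon>)"
    using lipschitz_onD[OF xi_lipschitz, of "z /\<^sub>R \<epsilon>" 0] by (simp add: dist_norm abs_le_iff)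
  also have "norm (z /\<^sub>R \<epsilon>) = norm z / \<epsilon>"
    using eps_pos by (simp add: field_simps)
  finally have "\<epsilon> powr (- real DIM('a)) * \<xi> (z /\<^sub>R \<epsilon>) \<le> \<epsilon> powr (- real DIM('a)) * (\<xi> 0 + L * (norm z / \<epsilon>))"
    by (intro mult_left_mono) auto
  then show ?thesis
    unfolding mollifier_def phi_slope_def by (simp add: algebra_simps)
qed

lemma phi_diff_mult_le:
  "\<phi> (z - w) * \<phi> w \<le> (\<phi> 0 + phi_slope * norm z) * \<phi> w + phi_slope * (\<phi> w * norm w)"
proof -
  have "phi_slope * norm (z - w) \<le> phi_slope * norm z + phi_slope * norm w"
    using mult_left_mono[OF norm_triangle_ineq4[of z w] phi_slope_nonneg] by (simp add: distrib_left)
  then have "\<phi> (z - w) \<le> \<phi> 0 + phi_slope * norm z + phi_slope * norm w"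
    using phi_le_affine[of "z - w"] by linarith
  then have "\<phi> (z - w) * \<phi> w \<le> (\<phi> 0 + phi_slope * norm z + phi_slope * norm w) * \<phi> w"
    by (intro mult_right_mono) simp_all
  then show ?thesis
    by (simp add: algebra_simps)
qed

text \<open>
  \<open>kernelK\<close> and \<open>convK\<close> are Bochner integrals, hence \<open>0\<close> where the integrand is not
  integrable. The affine growth of \<open>\<phi>\<close>, coming from the Lipschitz bound, rules this out,
  so both agree with the corresponding nonnegative integrals.
\<close>

lemma nn_integral_phi_conv_le_affine:
  "(\<integral>\<^sup>+w. ennreal (\<phi> (z - w) * \<phi> w) \<partial>lborel)
    \<le> ennreal (\<phi> 0 + phi_slope * (1 + \<epsilon>\<^sup>2 * M2_dens \<xi>) + phi_slope * norm z)"
proof -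
  have "(\<integral>\<^sup>+w. ennreal (\<phi> (z - w) * \<phi> w) \<partial>lborel)
      \<le> (\<integral>\<^sup>+w. ennreal (\<phi> 0 + phi_slope * norm z) * ennreal (\<phi> w)
        + ennreal phi_slope * ennreal (\<phi> w * norm w) \<partial>lborel)"
  proof (rule nn_integral_mono)
    fix w :: 'a
    have "ennreal (\<phi> (z - w) * \<phi> w)
        \<le> ennreal ((\<phi> 0 + phi_slope * norm z) * \<phi> w + phi_slope * (\<phi> w * norm w))"
      by (intro ennreal_leI phi_diff_mult_le)
    also have "\<dots> = ennreal (\<phi> 0 + phi_slope * norm z) * ennreal (\<phi> w)
        + ennreal phi_slope * ennreal (\<phi> w * norm w)"
      using phi_slope_nonneg by (simp add: ennreal_plus ennreal_mult)
    finally show "ennreal (\<phi> (z - w) * \<phi> w) \<le> ennreal (\<phi> 0 + phi_slope * norm z) * ennreal (\<phi> w)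
        + ennreal phi_slope * ennreal (\<phi> w * norm w)" .
  qed
  also have "\<dots> = ennreal (\<phi> 0 + phi_slope * norm z)
      + ennreal phi_slope * (\<integral>\<^sup>+w. ennreal (\<phi> w * norm w) \<partial>lborel)"
    by (simp add: nn_integral_add nn_integral_cmult nn_integral_phi)
  also have "\<dots> \<le> ennreal (\<phi> 0 + phi_slope * norm z) + ennreal phi_slope * ennreal (1 + \<epsilon>\<^sup>2 * M2_dens \<xi>)"
    by (intro add_left_mono mult_left_mono nn_integral_phi_norm_le) auto
  also have "\<dots> = ennreal (\<phi> 0 + phi_slope * (1 + \<epsilon>\<^sup>2 * M2_dens \<xi>) + phi_slope * norm z)"
    using phi_slope_nonneg M2_dens_nonneg
    by (simp add: ennreal_mult[symmetric] ennreal_plus[symmetric] algebra_simps del: ennreal_plus)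
  finally show ?thesis .
qed

lemma kernelK_nonneg: "kernelK \<epsilon> \<xi> z \<ge> 0"
  unfolding kernelK_def by (intro integral_nonneg_AE) auto

lemma ennreal_kernelK: "ennreal (kernelK \<epsilon> \<xi> z) = (\<integral>\<^sup>+w. ennreal (\<phi> (z - w) * \<phi> w) \<partial>lborel)"
proof -
  have "integrable lborel (\<lambda>w. \<phi> (z - w) * \<phi> w)"
    using nn_integral_phi_conv_le_affine[of z]
    by (intro integrableI_nonneg) (auto simp: top_unique[symmetric] order_le_less_trans[OF _ ennreal_less_top])
  then show ?thesis
    unfolding kernelK_def by (subst nn_integral_eq_integral) auto
qed

lemma kernelK_le_affine:
  obtains A B where "A \<ge> 0" "B \<ge> 0" "\<And>z. kernelK \<epsilon> \<xi> z \<le> A + B * norm z"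
proof
  define A where "A = \<phi> 0 + phi_slope * (1 + \<epsilon>\<^sup>2 * M2_dens \<xi>)"
  show "A \<ge> 0"
    unfolding A_def using phi_slope_nonneg M2_dens_nonneg by simp
  show "kernelK \<epsilon> \<xi> z \<le> A + phi_slope * norm z" for z
  proof -
    have "ennreal (kernelK \<epsilon> \<xi> z) \<le> ennreal (A + phi_slope * norm z)"
      using nn_integral_phi_conv_le_affine[of z] unfolding A_def by (simp only: ennreal_kernelK)
    moreover have "0 \<le> A + phi_slope * norm z"
      using \<open>A \<ge> 0\<close> phi_slope_nonneg by simp
    ultimately show ?thesis
      by (simp only: ennreal_le_iff)
  qed
qed (rule phi_slope_nonneg)

lemma measurable_kernelK[measurable]: "kernelK \<epsilon> \<xi> \<in> borel_measurable borel"
proof -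
  have "kernelK \<epsilon> \<xi> = (\<lambda>z. enn2real (\<integral>\<^sup>+w. ennreal (\<phi> (z - w) * \<phi> w) \<partial>lborel))"
    using kernelK_nonneg by (simp add: fun_eq_iff flip: ennreal_kernelK)
  also have "\<dots> \<in> borel_measurable borel"
    by measurable
  finally show ?thesis .
qed

end

locale lipschitz_mollifier_P2 = lipschitz_mollifier \<epsilon> \<xi> L + prob_space M
  for \<epsilon> :: real and \<xi> :: "'a::euclidean_space \<Rightarrow> real" and L :: real and M :: "'a measure" +
  assumes sets_M[measurable_cong]: "sets M = sets borel"
    and M2_integrable: "integrable M (\<lambda>x. (norm x)\<^sup>2)"
begin

interpretation M_lborel: pair_sigma_finite M lborel
  by (simp add: pair_sigma_finite_def sigma_finite_measure_axioms sigma_finite_lborel)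

definition mollified_density :: "'a \<Rightarrow> ennreal" where
  "mollified_density u = (\<integral>\<^sup>+y. ennreal (\<phi> (u - y)) \<partial>M)"

lemma measurable_mollified_density[measurable]: "mollified_density \<in> borel_measurable borel"
  unfolding mollified_density_def[abs_def] by measurable

lemma convK_nonneg: "convK \<epsilon> \<xi> M x \<ge> 0"
  unfolding convK_def by (intro integral_nonneg_AE) (auto simp: kernelK_nonneg)

lemma integrable_kernelK_diff: "integrable M (\<lambda>y. kernelK \<epsilon> \<xi> (x - y))"
proof -
  obtain A B where AB: "A \<ge> 0" "B \<ge> 0" "\<And>z. kernelK \<epsilon> \<xi> z \<le> A + B * norm z"
    using kernelK_le_affine by blast
  have "integrable M norm"
    using square_integrable_imp_integrable[of norm] M2_integrable by simp
  then have "integrable M (\<lambda>y. A + B * norm x + B * norm y)"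
    by simp
  then show ?thesis
  proof (rule Bochner_Integration.integrable_bound)
    show "AE y in M. norm (kernelK \<epsilon> \<xi> (x - y)) \<le> norm (A + B * norm x + B * norm y)"
    proof (intro AE_I2)
      fix y :: 'a
      have "B * norm (x - y) \<le> B * norm x + B * norm y"
        using mult_left_mono[OF norm_triangle_ineq4[of x y] AB(2)] by (simp add: distrib_left)
      then show "norm (kernelK \<epsilon> \<xi> (x - y)) \<le> norm (A + B * norm x + B * norm y)"
        using AB(3)[of "x - y"] kernelK_nonneg[of "x - y"] AB(1,2) by simp
    qed
  qed simp
qed

lemma ennreal_convK: "ennreal (convK \<epsilon> \<xi> M x) = (\<integral>\<^sup>+u. ennreal (\<phi> (x - u)) * mollified_density u \<partial>lborel)"
proof -
  have "ennreal (convK \<epsilon> \<xi> M x) = (\<integral>\<^sup>+y. ennreal (kernelK \<epsilon> \<xi> (x - y)) \<partial>M)"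
    unfolding convK_def using integrable_kernelK_diff
    by (subst nn_integral_eq_integral) (auto simp: kernelK_nonneg)
  also have "\<dots> = (\<integral>\<^sup>+y. (\<integral>\<^sup>+u. ennreal (\<phi> (x - u) * \<phi> (u - y)) \<partial>lborel) \<partial>M)"
  proof (rule nn_integral_cong)
    fix y :: 'a
    have "(\<lambda>u. ennreal (\<phi> (x - u) * \<phi> (u - y))) \<in> borel_measurable borel"
      by measurable
    from nn_integral_lborel_translate[OF this, of y]
    show "ennreal (kernelK \<epsilon> \<xi> (x - y)) = (\<integral>\<^sup>+u. ennreal (\<phi> (x - u) * \<phi> (u - y)) \<partial>lborel)"
      by (simp add: ennreal_kernelK algebra_simps)
  qed
  also have "\<dots> = (\<integral>\<^sup>+u. (\<integral>\<^sup>+y. ennreal (\<phi> (x - u) * \<phi> (u - y)) \<partial>M) \<partial>lborel)"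
    by (rule M_lborel.Fubini'[symmetric]) measurable
  also have "\<dots> = (\<integral>\<^sup>+u. ennreal (\<phi> (x - u)) * mollified_density u \<partial>lborel)"
    unfolding mollified_density_def by (simp add: ennreal_mult nn_integral_cmult)
  finally show ?thesis .
qed

lemma measurable_convK[measurable]: "convK \<epsilon> \<xi> M \<in> borel_measurable borel"
proof -
  have "convK \<epsilon> \<xi> M = (\<lambda>x. enn2real (\<integral>\<^sup>+u. ennreal (\<phi> (x - u)) * mollified_density u \<partial>lborel))"
    using convK_nonneg by (simp add: fun_eq_iff flip: ennreal_convK)
  also have "\<dots> \<in> borel_measurable borel"
    by measurable
  finally show ?thesis .
qed

definition gauss_remainder :: "real \<Rightarrow> 'a \<Rightarrow> ennreal" where
  "gauss_remainder \<delta> x =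
    (\<integral>\<^sup>+y. ennreal (\<phi> (x - y)) * (ennreal (gaussian_density \<delta> y) / mollified_density y) \<partial>lborel)"

lemma measurable_gauss_remainder[measurable]: "gauss_remainder \<delta> \<in> borel_measurable borel"
  unfolding gauss_remainder_def[abs_def] by measurable

lemma nn_integral_gauss_remainder:
  assumes "\<delta> > 0"
  shows "(\<integral>\<^sup>+x. gauss_remainder \<delta> x \<partial>M) \<le> 1"
proof -
  have "(\<integral>\<^sup>+x. gauss_remainder \<delta> x \<partial>M)
      = (\<integral>\<^sup>+y. (\<integral>\<^sup>+x. ennreal (\<phi> (x - y)) \<partial>M) * (ennreal (gaussian_density \<delta> y) / mollified_density y) \<partial>lborel)"
    unfolding gauss_remainder_def
    by (subst M_lborel.Fubini'[symmetric]) (simp_all add: nn_integral_multc)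
  also have "\<dots> = (\<integral>\<^sup>+y. mollified_density y * (ennreal (gaussian_density \<delta> y) / mollified_density y) \<partial>lborel)"
    unfolding mollified_density_def by (simp add: phi_minus_commute)
  also have "\<dots> \<le> (\<integral>\<^sup>+y. ennreal (gaussian_density \<delta> (y :: 'a)) \<partial>lborel)"
    by (intro nn_integral_mono ennreal_mult_divide_le)
  also have "\<dots> = 1"
    using assms by (rule nn_integral_gaussian_density)
  finally show ?thesis .
qed

lemma gauss_remainder_eq_top:
  assumes "\<delta> > 0" "convK \<epsilon> \<xi> M x = 0"
  shows "gauss_remainder \<delta> x = \<infinity>"
proof -
  have "(\<integral>\<^sup>+u. ennreal (\<phi> (x - u)) * mollified_density u \<partial>lborel) = 0"
    using ennreal_convK[of x] assms(2) by simp
  then have "AE y in lborel. ennreal (\<phi> (x - y)) * mollified_density y = 0"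
    by (subst (asm) nn_integral_0_iff_AE) auto
  then have "AE y in lborel. ennreal (\<phi> (x - y)) * (ennreal (gaussian_density \<delta> y) / mollified_density y)
      = ennreal (\<phi> (x - y)) * \<infinity>"
  proof (rule AE_mp, intro AE_I2 impI)
    fix y :: 'a
    assume vanish: "ennreal (\<phi> (x - y)) * mollified_density y = 0"
    show "ennreal (\<phi> (x - y)) * (ennreal (gaussian_density \<delta> y) / mollified_density y) = ennreal (\<phi> (x - y)) * \<infinity>"
    proof (cases "\<phi> (x - y) = 0")
      case False
      then have "mollified_density y = 0"
        using vanish by simp
      then show ?thesis
        using gaussian_density_pos[OF assms(1), of y] by simp
    qed simp
  qed
  then have "gauss_remainder \<delta> x = (\<integral>\<^sup>+y. ennreal (\<phi> (x - y)) * \<infinity> \<partial>lborel)"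
    unfolding gauss_remainder_def by (rule nn_integral_cong_AE)
  also have "\<dots> = \<infinity>"
    by (simp add: nn_integral_multc nn_integral_phi_diff)
  finally show ?thesis .
qed

lemma neg_ln_convK_le:
  assumes "\<delta> > 0" "convK \<epsilon> \<xi> M x > 0"
  shows "ennreal (2 - real DIM('a) / 2 * ln (pi / \<delta>) - ln (convK \<epsilon> \<xi> M x))
    \<le> ennreal (2 * \<delta> * ((norm x)\<^sup>2 + \<epsilon>\<^sup>2 * M2_dens \<xi>)) + 1 + gauss_remainder \<delta> x"
proof -
  define r where "r = convK \<epsilon> \<xi> M x"
  have r: "r > 0" "ennreal r = (\<integral>\<^sup>+u. ennreal (\<phi> (x - u)) * mollified_density u \<partial>lborel)"
    using assms(2) ennreal_convK[of x] unfolding r_def by simp_all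
  have "ennreal (2 - real DIM('a) / 2 * ln (pi / \<delta>) - ln r)
      = (\<integral>\<^sup>+y. ennreal (\<phi> (x - y)) * ennreal (2 - real DIM('a) / 2 * ln (pi / \<delta>) - ln r) \<partial>lborel)"
    by (simp add: nn_integral_multc nn_integral_phi_diff)
  also have "\<dots> \<le> (\<integral>\<^sup>+y. ennreal \<delta> * ennreal (\<phi> (x - y) * (norm y)\<^sup>2)
      + ennreal (\<phi> (x - y)) * mollified_density y / ennreal r
      + ennreal (\<phi> (x - y)) * (ennreal (gaussian_density \<delta> y) / mollified_density y) \<partial>lborel)"
    using assms(1) r(1) by (intro nn_integral_mono ennreal_mult_ln_ratio_gaussian_le) simp_all
  also have "\<dots> = ennreal \<delta> * (\<integral>\<^sup>+y. ennreal (\<phi> (x - y) * (norm y)\<^sup>2) \<partial>lborel)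
      + (\<integral>\<^sup>+y. ennreal (\<phi> (x - y)) * mollified_density y \<partial>lborel) / ennreal r + gauss_remainder \<delta> x"
    unfolding gauss_remainder_def by (simp add: nn_integral_add nn_integral_cmult nn_integral_divide)
  also have "\<dots> \<le> ennreal \<delta> * ennreal (2 * ((norm x)\<^sup>2 + \<epsilon>\<^sup>2 * M2_dens \<xi>)) + 1 + gauss_remainder \<delta> x"
    using r(1) by (intro add_mono mult_left_mono nn_integral_phi_diff_norm_sq_le) (simp_all flip: r(2))
  also have "ennreal \<delta> * ennreal (2 * ((norm x)\<^sup>2 + \<epsilon>\<^sup>2 * M2_dens \<xi>))
      = ennreal (2 * \<delta> * ((norm x)\<^sup>2 + \<epsilon>\<^sup>2 * M2_dens \<xi>))"
    using assms(1) by (simp add: ennreal_mult'[symmetric] mult_ac)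
  finally show ?thesis
    unfolding r_def .
qed

lemma ln_convK_ratio_ge:
  assumes "\<delta> > 0" and U: "\<And>y. U y \<ge> C0 + C1 * (norm y)\<^sup>2"
  shows "ennreal (C0 + C1 * (norm x)\<^sup>2 - 2 * \<delta> * ((norm x)\<^sup>2 + \<epsilon>\<^sup>2 * M2_dens \<xi>)
      - real DIM('a) / 2 * ln (pi / \<delta>) + 1 - ln (convK \<epsilon> \<xi> M x / exp (- U x)))
    \<le> gauss_remainder \<delta> x"
proof (cases "gauss_remainder \<delta> x" rule: ennreal_cases)
  case (real g)
  then have pos: "convK \<epsilon> \<xi> M x > 0"
    using gauss_remainder_eq_top[OF assms(1), of x] convK_nonneg[of x] by force
  have "ennreal (2 * \<delta> * ((norm x)\<^sup>2 + \<epsilon>\<^sup>2 * M2_dens \<xi>)) + 1 + gauss_remainder \<delta> x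
      = ennreal (2 * \<delta> * ((norm x)\<^sup>2 + \<epsilon>\<^sup>2 * M2_dens \<xi>) + 1 + g)"
    using real assms(1) M2_dens_nonneg by simp
  then have "ennreal (2 - real DIM('a) / 2 * ln (pi / \<delta>) - ln (convK \<epsilon> \<xi> M x))
      \<le> ennreal (2 * \<delta> * ((norm x)\<^sup>2 + \<epsilon>\<^sup>2 * M2_dens \<xi>) + 1 + g)"
    using neg_ln_convK_le[OF assms(1) pos] by simp
  then have "2 - real DIM('a) / 2 * ln (pi / \<delta>) - ln (convK \<epsilon> \<xi> M x)
      \<le> 2 * \<delta> * ((norm x)\<^sup>2 + \<epsilon>\<^sup>2 * M2_dens \<xi>) + 1 + g"
    using real assms(1) M2_dens_nonneg by (subst (asm) ennreal_le_iff) auto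
  moreover have "ln (convK \<epsilon> \<xi> M x / exp (- U x)) = ln (convK \<epsilon> \<xi> M x) + U x"
    using pos by (simp add: ln_div)
  ultimately show ?thesis
    unfolding real using U[of x] by (intro ennreal_leI) linarith
qed simp

lemma ext_integral_ln_convK_ratio_ge:
  assumes "\<delta> > 0" and [measurable]: "U \<in> borel_measurable borel"
    and U: "\<And>y. U y \<ge> C0 + C1 * (norm y)\<^sup>2"
  shows "ereal (C0 + C1 * M2 M - 2 * \<delta> * (M2 M + \<epsilon>\<^sup>2 * M2_dens \<xi>) - real DIM('a) / 2 * ln (pi / \<delta>))
    \<le> ext_integral M (\<lambda>x. ln (convK \<epsilon> \<xi> M x / exp (- U x)))"
proof -
  define A where "A = C0 - 2 * \<delta> * \<epsilon>\<^sup>2 * M2_dens \<xi> - real DIM('a) / 2 * ln (pi / \<delta>) + 1"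
  define B where "B = C1 - 2 * \<delta>"
  have "ennreal (A + B * (norm x)\<^sup>2 - ln (convK \<epsilon> \<xi> M x / exp (- U x))) \<le> gauss_remainder \<delta> x" for x
    using ln_convK_ratio_ge[OF assms(1) U, of x] unfolding A_def B_def by (simp add: algebra_simps)
  then have "ereal ((\<integral>x. A + B * (norm x)\<^sup>2 \<partial>M) - 1) \<le> ext_integral M (\<lambda>x. ln (convK \<epsilon> \<xi> M x / exp (- U x)))"
    using nn_integral_gauss_remainder[OF assms(1)] M2_integrable by (intro ext_integral_ge) auto
  also have "(\<integral>x. A + B * (norm x)\<^sup>2 \<partial>M) - 1
      = C0 + C1 * M2 M - 2 * \<delta> * (M2 M + \<epsilon>\<^sup>2 * M2_dens \<xi>) - real DIM('a) / 2 * ln (pi / \<delta>)"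
    using M2_integrable unfolding A_def B_def by (simp add: M2_def prob_space algebra_simps)
  finally show ?thesis .
qed

end

theorem mainTheorem11:
  fixes F :: "'a::euclidean_space measure \<Rightarrow> real"
    and \<xi> U :: "'a \<Rightarrow> real"
    and \<sigma> \<epsilon> Fmin C0 C1 :: real
  assumes "\<sigma> > 0" and "\<epsilon> > 0"
    and F_lb: "\<And>m. P2 m \<Longrightarrow> F m \<ge> Fmin"
    and xi_smooth: "smooth_fun \<xi>"
    and xi_lip: "\<exists>L. L-lipschitz_on UNIV \<xi>"
    and xi_radial: "\<And>x y. norm x = norm y \<Longrightarrow> \<xi> x = \<xi> y"
    and xi_nonneg: "\<And>z. \<xi> z \<ge> 0"
    and xi_int: "integrable lborel \<xi>" and xi_one: "(\<integral>z. \<xi> z \<partial>lborel) = 1"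
    and xi_supp: "closure {z. \<xi> z \<noteq> 0} = UNIV"
    and xi_M2: "integrable lborel (\<lambda>z. (norm z)\<^sup>2 * \<xi> z)"
    and U_meas: "U \<in> borel_measurable borel"
    and pi_dens: "(\<integral>\<^sup>+x. ennreal (exp (- U x)) \<partial>lborel) = 1"
    and "C1 > 0"
    and U_lb: "\<And>x. U x \<ge> C0 + C1 * (norm x)\<^sup>2"
  shows "\<forall>m \<delta>. P2 m \<and> \<delta> > 0 \<longrightarrow>
     ereal (Fmin / \<sigma> + C0 + C1 * M2 m - (2 * pi / \<delta>) powr (real DIM('a) / 2)
             - 2 * \<delta> * (M2 m + \<epsilon>\<^sup>2 * M2_dens \<xi>))
     \<le> Vfun F \<sigma> \<epsilon> \<xi> (\<lambda>x. exp (- U x)) m / ereal \<sigma>"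
proof (intro allI impI, elim conjE)
  fix m :: "'a measure" and \<delta> :: real
  assume m: "P2 m" and "\<delta> > 0"
  obtain L where "L-lipschitz_on UNIV \<xi>"
    using xi_lip by blast
  then have "lipschitz_mollifier_P2 \<epsilon> \<xi> L m"
    using m \<open>\<epsilon> > 0\<close> xi_radial xi_nonneg xi_int xi_one xi_M2
    unfolding lipschitz_mollifier_P2_def lipschitz_mollifier_P2_axioms_def lipschitz_mollifier_def P2_def
    by blast
  then interpret lipschitz_mollifier_P2 \<epsilon> \<xi> L m .
  have "ereal (Fmin / \<sigma> + (C0 + C1 * M2 m - 2 * \<delta> * (M2 m + \<epsilon>\<^sup>2 * M2_dens \<xi>)
      - real DIM('a) / 2 * ln (pi / \<delta>))) \<le> Vfun F \<sigma> \<epsilon> \<xi> (\<lambda>x. exp (- U x)) m / ereal \<sigma>"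
    unfolding Vfun_def using \<open>\<sigma> > 0\<close> F_lb[OF m]
    by (intro ereal_divide_add_mult_ge ext_integral_ln_convK_ratio_ge \<open>\<delta> > 0\<close> U_meas U_lb)
  moreover have "real DIM('a) / 2 * ln (pi / \<delta>) \<le> (2 * pi / \<delta>) powr (real DIM('a) / 2)"
    using \<open>\<delta> > 0\<close> by (intro mult_ln_le_powr) (auto simp: divide_right_mono)
  ultimately show "ereal (Fmin / \<sigma> + C0 + C1 * M2 m - (2 * pi / \<delta>) powr (real DIM('a) / 2)
      - 2 * \<delta> * (M2 m + \<epsilon>\<^sup>2 * M2_dens \<xi>)) \<le> Vfun F \<sigma> \<epsilon> \<xi> (\<lambda>x. exp (- U x)) m / ereal \<sigma>"
    by (elim order_trans[rotated]) simp
qed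

end
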